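(* Let $c,d,u\in P$ with $c<d<u$. Then $(P;{\rm Low})$ has a primitive positive interpretation in $(P;{\rm Sep},c,d,u)$.
   Context: $(P;\leq)$ is the random partial order (Fraïssé limit of all finite partial orders); $x<y$ means $x\leq y\wedge x\ne y$; $x\bot y$ incomparability; $z\bot xy$ abbreviates $z\bot x\wedge z\bot y$. ${\rm Low}(x,y,z):=(x<y\wedge z\bot xy)\vee(x<z\wedge y\bot xz)$. ${\rm Cycl}(x,y,z):=(x<y\wedge y<z)\vee(y<z\wedge z<x)\vee(z<x\wedge x<y)\vee(x<y\wedge z\bot xy)\vee(y<z\wedge x\bot yz)\vee(z<x\wedge y\bot zx)$; ${\rm Sep}(x,y,z,t):=({\rm Cycl}(x,y,z)\wedge{\rm Cycl}(y,z,t)\wedge{\rm Cycl}(x,y,t)\wedge{\rm Cycl}(x,z,t))\vee({\rm Cycl}(z,y,x)\wedge{\rm Cycl}(t,z,y)\wedge{\rm Cycl}(t,y,x)\wedge{\rm Cycl}(t,z,x))$. Primitive positive interpretation of $\Delta$ (domain $D$) in $\Gamma$: $n\geq1$ and a surjective partial map $I:P^n\to D$ whose domain, preimage of equality and preimages of relations of $\Delta$ are definable in $\Gamma$ by formulas $\exists\bar y$ (conjunction of atomic formulas). *)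

theory Defs
  imports "HOL-Library.Countable_Set"
begin

definition po_less :: "('a \<Rightarrow> 'a \<Rightarrow> bool) \<Rightarrow> 'a \<Rightarrow> 'a \<Rightarrow> bool" where
  "po_less le x y \<longleftrightarrow> le x y \<and> x \<noteq> y"

definition po_inc :: "('a \<Rightarrow> 'a \<Rightarrow> bool) \<Rightarrow> 'a \<Rightarrow> 'a \<Rightarrow> bool" where
  "po_inc le x y \<longleftrightarrow> \<not> le x y \<and> \<not> le y x"

definition partial_order_on :: "'a set \<Rightarrow> ('a \<Rightarrow> 'a \<Rightarrow> bool) \<Rightarrow> bool" where
  "partial_order_on A le \<longleftrightarrow>
     (\<forall>x\<in>A. le x x) \<and>
     (\<forall>x\<in>A. \<forall>y\<in>A. le x y \<and> le y x \<longrightarrow> x = y) \<and>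
     (\<forall>x\<in>A. \<forall>y\<in>A. \<forall>z\<in>A. le x y \<and> le y z \<longrightarrow> le x z)"

text \<open>(UNIV, le) is the random partial order: the Fraisse limit of the class of all
  finite partial orders, i.e. a countable partial order into which every finite partial
  order embeds and which is homogeneous (every isomorphism between finite substructures
  extends to an automorphism).\<close>
definition random_po :: "('a \<Rightarrow> 'a \<Rightarrow> bool) \<Rightarrow> bool" where
  "random_po le \<longleftrightarrow>
     countable (UNIV :: 'a set) \<and>
     partial_order_on UNIV le \<and>
     (\<forall>(n::nat) (r::nat \<Rightarrow> nat \<Rightarrow> bool). partial_order_on {..<n} r \<longrightarrow>
        (\<exists>f. inj_on f {..<n} \<and> (\<forall>i<n. \<forall>j<n. r i j \<longleftrightarrow> le (f i) (f j)))) \<and>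
     (\<forall>A g. finite A \<and> inj_on g A \<and> (\<forall>x\<in>A. \<forall>y\<in>A. le x y \<longleftrightarrow> le (g x) (g y)) \<longrightarrow>
        (\<exists>h. bij h \<and> (\<forall>x y. le x y \<longleftrightarrow> le (h x) (h y)) \<and> (\<forall>x\<in>A. h x = g x)))"

definition Low :: "('a \<Rightarrow> 'a \<Rightarrow> bool) \<Rightarrow> 'a \<Rightarrow> 'a \<Rightarrow> 'a \<Rightarrow> bool" where
  "Low le x y z \<longleftrightarrow>
     (po_less le x y \<and> po_inc le z x \<and> po_inc le z y) \<or>
     (po_less le x z \<and> po_inc le y x \<and> po_inc le y z)"

definition Cycl :: "('a \<Rightarrow> 'a \<Rightarrow> bool) \<Rightarrow> 'a \<Rightarrow> 'a \<Rightarrow> 'a \<Rightarrow> bool" where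
  "Cycl le x y z \<longleftrightarrow>
     (po_less le x y \<and> po_less le y z) \<or>
     (po_less le y z \<and> po_less le z x) \<or>
     (po_less le z x \<and> po_less le x y) \<or>
     (po_less le x y \<and> po_inc le z x \<and> po_inc le z y) \<or>
     (po_less le y z \<and> po_inc le x y \<and> po_inc le x z) \<or>
     (po_less le z x \<and> po_inc le y z \<and> po_inc le y x)"

definition Sep :: "('a \<Rightarrow> 'a \<Rightarrow> bool) \<Rightarrow> 'a \<Rightarrow> 'a \<Rightarrow> 'a \<Rightarrow> 'a \<Rightarrow> bool" where
  "Sep le x y z t \<longleftrightarrow>
     (Cycl le x y z \<and> Cycl le y z t \<and> Cycl le x y t \<and> Cycl le x z t) \<or>
     (Cycl le z y x \<and> Cycl le t z y \<and> Cycl le t y x \<and> Cycl le t z x)"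

text \<open>A relational structure on the type 'a is given by a list of relations, each a
  predicate on tuples (lists). Constants are represented, as usual, by singleton unary
  relations.\<close>

datatype atom = Eq nat nat | Rel nat "nat list"

fun atom_vars :: "atom \<Rightarrow> nat set" where
  "atom_vars (Eq i j) = {i, j}"
| "atom_vars (Rel r args) = set args"

fun holds :: "('a list \<Rightarrow> bool) list \<Rightarrow> (nat \<Rightarrow> 'a) \<Rightarrow> atom \<Rightarrow> bool" where
  "holds rels v (Eq i j) \<longleftrightarrow> v i = v j"
| "holds rels v (Rel r args) \<longleftrightarrow> r < length rels \<and> (rels ! r) (map v args)"

text \<open>R (a relation on k-tuples) is pp-definable in the structure: there are m existentially
  quantified variables (indices k..k+m-1; free variables are 0..k-1) and a finite
  conjunction of atoms defining R.\<close>
definition pp_definable :: "('a list \<Rightarrow> bool) list \<Rightarrow> nat \<Rightarrow> ('a list \<Rightarrow> bool) \<Rightarrow> bool" where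
  "pp_definable rels k R \<longleftrightarrow>
     (\<exists>(m::nat) (atoms::atom list).
        (\<forall>a\<in>set atoms. \<forall>i\<in>atom_vars a. i < k + m) \<and>
        (\<forall>xs. length xs = k \<longrightarrow>
           (R xs \<longleftrightarrow> (\<exists>ys. length ys = m \<and> (\<forall>a\<in>set atoms. holds rels (\<lambda>i. (xs @ ys) ! i) a)))))"

definition chunk :: "nat \<Rightarrow> nat \<Rightarrow> 'a list \<Rightarrow> 'a list" where
  "chunk n i zs = take n (drop (i * n) zs)"

text \<open>Primitive positive interpretation of Delta (domain: the type 'b; relations given with
  their arities) in Gamma (domain: the type 'a): n \<ge> 1 and a surjective partial map
  I : 'a^n \<rightharpoonup> 'b whose domain, preimage of equality, and preimages of the relations of
  Delta are pp-definable in Gamma.\<close>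
definition pp_interprets :: "(nat \<times> ('b list \<Rightarrow> bool)) list \<Rightarrow> ('a list \<Rightarrow> bool) list \<Rightarrow> bool" where
  "pp_interprets delta gamma \<longleftrightarrow>
     (\<exists>(n::nat) (I :: 'a list \<Rightarrow> 'b option). n \<ge> 1 \<and>
        (\<forall>b. \<exists>xs. length xs = n \<and> I xs = Some b) \<and>
        pp_definable gamma n (\<lambda>xs. I xs \<noteq> None) \<and>
        pp_definable gamma (2 * n)
          (\<lambda>zs. \<exists>b. I (chunk n 0 zs) = Some b \<and> I (chunk n 1 zs) = Some b) \<and>
        (\<forall>(k, R)\<in>set delta.
           pp_definable gamma (k * n)
             (\<lambda>zs. \<exists>bs. length bs = k \<and> (\<forall>i<k. I (chunk n i zs) = Some (bs ! i)) \<and> R bs)))"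

end

theory Submission
  imports Defs
begin

text \<open>Inside the open interval (c, d), which is the set of all x with Sep c u d x, both
  incomparability and Low are primitive positive definable from Sep with the parameters c, d, u;
  the existential witnesses these formulas need are supplied by the one-point extension property
  of the random partial order. The interval is itself a countable partial order with the
  extension property, so a back-and-forth argument makes it isomorphic to the whole order, and
  this isomorphism is a one-dimensional interpretation.\<close>

lemma partial_order_on_UNIV_D:
  assumes "partial_order_on UNIV le"
  shows "le x x" and "le x y \<Longrightarrow> le y x \<Longrightarrow> x = y" and "le x y \<Longrightarrow> le y z \<Longrightarrow> le x z"
  using assms unfolding partial_order_on_def by blast+

definition consistent_cut :: "('a \<Rightarrow> 'a \<Rightarrow> bool) \<Rightarrow> 'a set \<Rightarrow> 'a set \<Rightarrow> 'a set \<Rightarrow> bool" where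
  "consistent_cut le A L U \<longleftrightarrow> L \<subseteq> A \<and> U \<subseteq> A \<and>
     (\<forall>a\<in>A. \<forall>b\<in>L. le a b \<longrightarrow> a \<in> L) \<and> (\<forall>a\<in>U. \<forall>b\<in>A. le a b \<longrightarrow> b \<in> U) \<and>
     (\<forall>a\<in>L. \<forall>b\<in>U. le a b) \<and> L \<inter> U = {}"

lemma consistent_cutI:
  assumes "L \<subseteq> A" "U \<subseteq> A" "\<And>a b. a \<in> A \<Longrightarrow> b \<in> L \<Longrightarrow> le a b \<Longrightarrow> a \<in> L"
    "\<And>a b. a \<in> U \<Longrightarrow> b \<in> A \<Longrightarrow> le a b \<Longrightarrow> b \<in> U" "\<And>a b. a \<in> L \<Longrightarrow> b \<in> U \<Longrightarrow> le a b"
    "L \<inter> U = {}"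
  shows "consistent_cut le A L U"
  using assms unfolding consistent_cut_def by blast

lemma consistent_cutD:
  assumes "consistent_cut le A L U"
  shows "L \<subseteq> A" "U \<subseteq> A" "\<And>a b. a \<in> A \<Longrightarrow> b \<in> L \<Longrightarrow> le a b \<Longrightarrow> a \<in> L"
    "\<And>a b. a \<in> U \<Longrightarrow> b \<in> A \<Longrightarrow> le a b \<Longrightarrow> b \<in> U" "\<And>a b. a \<in> L \<Longrightarrow> b \<in> U \<Longrightarrow> le a b"
    "L \<inter> U = {}"
  using assms unfolding consistent_cut_def by blast+

definition realizes_cut :: "('a \<Rightarrow> 'a \<Rightarrow> bool) \<Rightarrow> 'a set \<Rightarrow> 'a set \<Rightarrow> 'a set \<Rightarrow> 'a \<Rightarrow> bool" where
  "realizes_cut le A L U p \<longleftrightarrow> p \<notin> A \<and> (\<forall>a\<in>A. (le a p \<longleftrightarrow> a \<in> L) \<and> (le p a \<longleftrightarrow> a \<in> U))"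

definition extension_property :: "'a set \<Rightarrow> ('a \<Rightarrow> 'a \<Rightarrow> bool) \<Rightarrow> bool" where
  "extension_property S le \<longleftrightarrow>
     (\<forall>A L U. finite A \<and> A \<subseteq> S \<and> consistent_cut le A L U \<longrightarrow> (\<exists>p\<in>S. realizes_cut le A L U p))"

lemma extension_propertyE:
  assumes "extension_property S le" "finite A" "A \<subseteq> S" "consistent_cut le A L U"
  obtains p where "p \<in> S" "realizes_cut le A L U p"
  using assms unfolding extension_property_def by blast

lemma extension_property_nonempty: "extension_property S le \<Longrightarrow> S \<noteq> {}"
  using extension_propertyE[of S le "{}" "{}" "{}"] by (auto simp: consistent_cut_def)

text \<open>The finite order on {0..n}: A enumerated by g as 0, ..., n - 1, and a new point n above L
  and below U.\<close>
definition cut_extension ::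
    "('a \<Rightarrow> 'a \<Rightarrow> bool) \<Rightarrow> (nat \<Rightarrow> 'a) \<Rightarrow> 'a set \<Rightarrow> 'a set \<Rightarrow> nat \<Rightarrow> nat \<Rightarrow> nat \<Rightarrow> bool" where
  "cut_extension le g L U n i j \<longleftrightarrow> i = j \<or> (i < n \<and> j < n \<and> le (g i) (g j)) \<or>
     (i < n \<and> j = n \<and> g i \<in> L) \<or> (i = n \<and> j < n \<and> g j \<in> U)"

lemma partial_order_on_cut_extension:
  assumes po: "partial_order_on UNIV le" and g: "bij_betw g {..<n} A"
    and cut: "consistent_cut le A L U"
  shows "partial_order_on {..<Suc n} (cut_extension le g L U n)"
proof -
  note le = partial_order_on_UNIV_D[OF po]
  have gA: "i < n \<Longrightarrow> g i \<in> A" for i using g by (auto simp: bij_betw_def)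
  have ginj: "i < n \<Longrightarrow> j < n \<Longrightarrow> g i = g j \<Longrightarrow> i = j" for i j
    using g by (auto simp: bij_betw_def inj_on_def)
  show ?thesis
    unfolding partial_order_on_def
  proof (intro conjI ballI impI)
    fix i j assume ij: "i \<in> {..<Suc n}" "j \<in> {..<Suc n}"
      and r: "cut_extension le g L U n i j \<and> cut_extension le g L U n j i"
    show "i = j"
    proof (rule ccontr)
      assume "i \<noteq> j"
      with ij r consider "i < n" "j < n" "le (g i) (g j)" "le (g j) (g i)" | "i < n" "g i \<in> L" "g i \<in> U"
        | "j < n" "g j \<in> L" "g j \<in> U"
        unfolding cut_extension_def by auto
      then show False
        by cases (use \<open>i \<noteq> j\<close> ginj le(2) consistent_cutD(6)[OF cut] in auto)
    qed
  next
    fix i j k assume "i \<in> {..<Suc n}" "j \<in> {..<Suc n}" "k \<in> {..<Suc n}"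
      and r: "cut_extension le g L U n i j \<and> cut_extension le g L U n j k"
    then consider "i = j \<or> j = k \<or> i = k" | "i < n" "j < n" "k < n" "le (g i) (g j)" "le (g j) (g k)"
      | "i < n" "j < n" "k = n" "le (g i) (g j)" "g j \<in> L"
      | "i = n" "j < n" "k < n" "g j \<in> U" "le (g j) (g k)"
      | "i < n" "j = n" "k < n" "g i \<in> L" "g k \<in> U"
      unfolding cut_extension_def by (auto simp: less_Suc_eq)
    then show "cut_extension le g L U n i k"
    proof cases
      case 1 then show ?thesis using r by (auto simp: cut_extension_def)
    next
      case 2 then show ?thesis using le(3) by (auto simp: cut_extension_def)
    next
      case 3 then show ?thesis using consistent_cutD(3)[OF cut] gA by (auto simp: cut_extension_def)
    next
      case 4 then show ?thesis using consistent_cutD(4)[OF cut] gA by (auto simp: cut_extension_def)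
    next
      case 5 then show ?thesis using consistent_cutD(5)[OF cut] by (auto simp: cut_extension_def)
    qed
  qed (simp add: cut_extension_def)
qed

lemma random_po_embeds_finite_order:
  fixes n :: nat
  assumes "random_po le" "partial_order_on {..<n} r"
  obtains f where "inj_on f {..<n}" "\<And>i j. i < n \<Longrightarrow> j < n \<Longrightarrow> r i j \<longleftrightarrow> le (f i) (f j)"
proof -
  have "\<forall>(n::nat) r. partial_order_on {..<n} r \<longrightarrow>
      (\<exists>f. inj_on f {..<n} \<and> (\<forall>i<n. \<forall>j<n. r i j \<longleftrightarrow> le (f i) (f j)))"
    using assms(1) unfolding random_po_def by (elim conjE)
  from this[rule_format, OF assms(2)] show thesis using that by blast
qed

lemma random_po_homogeneous:
  assumes "random_po le" "finite A" "inj_on g A" "\<forall>x\<in>A. \<forall>y\<in>A. le x y \<longleftrightarrow> le (g x) (g y)"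
  obtains h where "bij h" "\<And>x y. le x y \<longleftrightarrow> le (h x) (h y)" "\<And>x. x \<in> A \<Longrightarrow> h x = g x"
proof -
  have "\<forall>A g. finite A \<and> inj_on g A \<and> (\<forall>x\<in>A. \<forall>y\<in>A. le x y \<longleftrightarrow> le (g x) (g y)) \<longrightarrow>
      (\<exists>h. bij h \<and> (\<forall>x y. le x y \<longleftrightarrow> le (h x) (h y)) \<and> (\<forall>x\<in>A. h x = g x))"
    using assms(1) unfolding random_po_def by (elim conjE)
  from this[rule_format, of A g] show thesis using assms(2-) that by blast
qed

lemma random_po_extension_property:
  assumes rp: "random_po le"
  shows "extension_property UNIV le"
  unfolding extension_property_def
proof (intro allI impI ballI, elim conjE)
  fix A L U :: "'a set"
  assume "finite A" and cut: "consistent_cut le A L U"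
  have po: "partial_order_on UNIV le" using rp by (simp add: random_po_def)
  note le = partial_order_on_UNIV_D[OF po]
  define n where "n = card A"
  obtain g where g: "bij_betw g {..<n} A"
    using ex_bij_betw_nat_finite[OF \<open>finite A\<close>] unfolding n_def atLeast0LessThan by blast
  let ?r = "cut_extension le g L U n"
  obtain f where inj_f: "inj_on f {..<Suc n}" and f: "\<And>i j. i < Suc n \<Longrightarrow> j < Suc n \<Longrightarrow> ?r i j \<longleftrightarrow> le (f i) (f j)"
    using random_po_embeds_finite_order[OF rp partial_order_on_cut_extension[OF po g cut]] by blast
  have finj: "inj_on f {..<n}" by (rule inj_on_subset[OF inj_f]) auto
  define k where "k x = g (inv_into {..<n} f x)" for x
  have kf: "i < n \<Longrightarrow> k (f i) = g i" for i unfolding k_def using finj by simp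
  have ginj: "inj_on g {..<n}" using g by (simp add: bij_betw_def)
  have "inj_on k (f ` {..<n})"
    using ginj kf by (auto simp: inj_on_def)
  moreover have "\<forall>x\<in>f ` {..<n}. \<forall>y\<in>f ` {..<n}. le x y \<longleftrightarrow> le (k x) (k y)"
  proof -
    have "le (f i) (f j) \<longleftrightarrow> le (g i) (g j)" if "i < n" "j < n" for i j
      using f[of i j] that le(1) unfolding cut_extension_def by auto
    then show ?thesis using kf by auto
  qed
  ultimately obtain h where "bij h" and h: "\<And>x y. le x y \<longleftrightarrow> le (h x) (h y)"
    and hk: "\<And>x. x \<in> f ` {..<n} \<Longrightarrow> h x = k x"
    by (rule random_po_homogeneous[OF rp finite_imageI[OF finite_lessThan]]) blast
  \<comment> \<open>The automorphism h moves the copy of A inside the image of f back onto A.\<close>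
  have hf: "i < n \<Longrightarrow> h (f i) = g i" for i using hk kf by simp
  have "le a (h (f n)) \<longleftrightarrow> a \<in> L" "le (h (f n)) a \<longleftrightarrow> a \<in> U" if "a \<in> A" for a
  proof -
    obtain i where i: "i < n" "a = g i" using g \<open>a \<in> A\<close> by (auto simp: bij_betw_def)
    have "le a (h (f n)) \<longleftrightarrow> ?r i n" using h[of "f i" "f n"] f[of i n] hf i by simp
    moreover have "le (h (f n)) a \<longleftrightarrow> ?r n i" using h[of "f n" "f i"] f[of n i] hf i by simp
    ultimately show "le a (h (f n)) \<longleftrightarrow> a \<in> L" "le (h (f n)) a \<longleftrightarrow> a \<in> U"
      using i by (auto simp: cut_extension_def)
  qed
  moreover have "h (f n) \<notin> A"
    using calculation[of "h (f n)"] cut le(1) by (auto simp: consistent_cut_def)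
  ultimately show "\<exists>p\<in>UNIV. realizes_cut le A L U p"
    unfolding realizes_cut_def by blast
qed

definition partial_iso ::
    "('a \<Rightarrow> 'a \<Rightarrow> bool) \<Rightarrow> ('b \<Rightarrow> 'b \<Rightarrow> bool) \<Rightarrow> 'a set \<Rightarrow> 'b set \<Rightarrow> ('a \<times> 'b) set \<Rightarrow> bool" where
  "partial_iso le1 le2 S T F \<longleftrightarrow> finite F \<and> F \<subseteq> S \<times> T \<and>
     (\<forall>a b a' b'. (a, b) \<in> F \<longrightarrow> (a', b') \<in> F \<longrightarrow> (le1 a a' \<longleftrightarrow> le2 b b') \<and> (a = a' \<longleftrightarrow> b = b'))"

lemma partial_iso_empty: "partial_iso le1 le2 S T {}"
  unfolding partial_iso_def by simp

lemma partial_iso_converse: "partial_iso le1 le2 S T F \<Longrightarrow> partial_iso le2 le1 T S (F\<inverse>)"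
  unfolding partial_iso_def by auto

lemma partial_iso_insert:
  assumes "partial_iso le1 le2 S T F" "a \<in> S" "b \<in> T" "le1 a a" "le2 b b"
    "a \<notin> Domain F" "b \<notin> Range F"
    "\<And>a' b'. (a', b') \<in> F \<Longrightarrow> (le1 a' a \<longleftrightarrow> le2 b' b) \<and> (le1 a a' \<longleftrightarrow> le2 b b')"
  shows "partial_iso le1 le2 S T (insert (a, b) F)"
  using assms unfolding partial_iso_def by (simp add: Domain.simps Range.simps) blast

lemma partial_iso_image_cut:
  assumes F: "partial_iso le1 le2 S T F" and po: "partial_order_on S le1"
    and "a \<in> S" "a \<notin> Domain F"
  shows "consistent_cut le2 (Range F) {b'. \<exists>a'. (a', b') \<in> F \<and> le1 a' a} {b'. \<exists>a'. (a', b') \<in> F \<and> le1 a a'}"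
proof -
  have sub: "F \<subseteq> S \<times> T"
    and iso: "\<And>a b a' b'. (a, b) \<in> F \<Longrightarrow> (a', b') \<in> F \<Longrightarrow> (le1 a a' \<longleftrightarrow> le2 b b') \<and> (a = a' \<longleftrightarrow> b = b')"
    using F unfolding partial_iso_def by blast+
  have S_trans: "le1 x y \<Longrightarrow> le1 y z \<Longrightarrow> le1 x z" and S_antisym: "le1 x y \<Longrightarrow> le1 y x \<Longrightarrow> x = y"
    if "x \<in> S" "y \<in> S" "z \<in> S" for x y z
    using po that unfolding partial_order_on_def by blast+
  show ?thesis
    unfolding consistent_cut_def
  proof (intro conjI ballI impI)
    fix x y assume "x \<in> Range F" "y \<in> {b'. \<exists>a'. (a', b') \<in> F \<and> le1 a' a}" "le2 x y"
    then show "x \<in> {b'. \<exists>a'. (a', b') \<in> F \<and> le1 a' a}"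
      using iso sub S_trans \<open>a \<in> S\<close> by (blast dest: subsetD)
  next
    fix x y assume "x \<in> {b'. \<exists>a'. (a', b') \<in> F \<and> le1 a a'}" "y \<in> Range F" "le2 x y"
    then show "y \<in> {b'. \<exists>a'. (a', b') \<in> F \<and> le1 a a'}"
      using iso sub S_trans \<open>a \<in> S\<close> by (blast dest: subsetD)
  next
    fix x y assume "x \<in> {b'. \<exists>a'. (a', b') \<in> F \<and> le1 a' a}" "y \<in> {b'. \<exists>a'. (a', b') \<in> F \<and> le1 a a'}"
    then show "le2 x y"
      using iso sub S_trans \<open>a \<in> S\<close> by (blast dest: subsetD)
  next
    show "{b'. \<exists>a'. (a', b') \<in> F \<and> le1 a' a} \<inter> {b'. \<exists>a'. (a', b') \<in> F \<and> le1 a a'} = {}"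
      using iso sub S_antisym \<open>a \<in> S\<close> \<open>a \<notin> Domain F\<close> by (blast dest: subsetD)
  qed blast+
qed

lemma partial_iso_extend_domain:
  assumes F: "partial_iso le1 le2 S T F" and po1: "partial_order_on S le1" and po2: "partial_order_on T le2"
    and ext: "extension_property T le2" and "a \<in> S"
  shows "\<exists>b. partial_iso le1 le2 S T (insert (a, b) F)"
proof (cases "a \<in> Domain F")
  case True
  then obtain b where "(a, b) \<in> F" by blast
  then show ?thesis using F by (metis insert_absorb)
next
  case False
  let ?L = "{b'. \<exists>a'. (a', b') \<in> F \<and> le1 a' a}" and ?U = "{b'. \<exists>a'. (a', b') \<in> F \<and> le1 a a'}"
  have sub: "F \<subseteq> S \<times> T" and fin: "finite F"
    and iso: "\<And>a b a' b'. (a, b) \<in> F \<Longrightarrow> (a', b') \<in> F \<Longrightarrow> (le1 a a' \<longleftrightarrow> le2 b b') \<and> (a = a' \<longleftrightarrow> b = b')"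
    using F unfolding partial_iso_def by blast+
  obtain b where "b \<in> T" and b: "realizes_cut le2 (Range F) ?L ?U b"
    using extension_propertyE[OF ext _ _ partial_iso_image_cut[OF F po1 \<open>a \<in> S\<close> False]] fin sub
    by (auto simp: finite_Range)
  have "partial_iso le1 le2 S T (insert (a, b) F)"
  proof (rule partial_iso_insert[OF F \<open>a \<in> S\<close> \<open>b \<in> T\<close> _ _ False])
    show "le1 a a" "le2 b b" using po1 po2 \<open>a \<in> S\<close> \<open>b \<in> T\<close> unfolding partial_order_on_def by blast+
    show "b \<notin> Range F" using b unfolding realizes_cut_def by blast
    show "(le1 a' a \<longleftrightarrow> le2 b' b) \<and> (le1 a a' \<longleftrightarrow> le2 b b')" if "(a', b') \<in> F" for a' b'
      using b that iso unfolding realizes_cut_def by (blast intro: RangeI)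
  qed
  then show ?thesis by blast
qed

lemma partial_iso_extend_range:
  assumes "partial_iso le1 le2 S T F" "partial_order_on S le1" "partial_order_on T le2"
    "extension_property S le1" "b \<in> T"
  shows "\<exists>a. partial_iso le1 le2 S T (insert (a, b) F)"
proof -
  obtain a where "partial_iso le2 le1 T S (insert (b, a) (F\<inverse>))"
    using partial_iso_extend_domain[OF partial_iso_converse[OF assms(1)] assms(3,2,4,5)] by blast
  moreover have "(insert (b, a) (F\<inverse>))\<inverse> = insert (a, b) F" by auto
  ultimately show ?thesis using partial_iso_converse by metis
qed

lemma partial_iso_chain_Union:
  assumes F: "\<And>n. partial_iso le1 le2 S T (F n)" and mono: "\<And>n. F n \<subseteq> F (Suc n)"
    and dom: "S \<subseteq> Domain (\<Union>n. F n)" and ran: "T \<subseteq> Range (\<Union>n. F n)"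
  shows "\<exists>h. bij_betw h S T \<and> (\<forall>x\<in>S. \<forall>y\<in>S. le1 x y \<longleftrightarrow> le2 (h x) (h y))"
proof -
  define G where "G = (\<Union>n. F n)"
  have sub: "G \<subseteq> S \<times> T" using F unfolding G_def partial_iso_def by blast
  have iso: "(le1 a a' \<longleftrightarrow> le2 b b') \<and> (a = a' \<longleftrightarrow> b = b')" if ab: "(a, b) \<in> G" "(a', b') \<in> G" for a b a' b'
  proof -
    obtain i j where "(a, b) \<in> F i" "(a', b') \<in> F j" using ab unfolding G_def by blast
    then have "(a, b) \<in> F (max i j)" "(a', b') \<in> F (max i j)"
      using lift_Suc_mono_le[of F, OF mono] by (meson max.cobounded1 max.cobounded2 subsetD)+
    then show ?thesis using F[of "max i j"] unfolding partial_iso_def by blast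
  qed
  define h where "h x = (SOME y. (x, y) \<in> G)" for x
  have hG: "(x, h x) \<in> G" if "x \<in> S" for x
  proof -
    have "\<exists>y. (x, y) \<in> G" using dom that unfolding G_def by blast
    then show ?thesis unfolding h_def by (rule someI_ex)
  qed
  have "h ` S = T"
  proof
    show "h ` S \<subseteq> T" using hG sub by blast
    show "T \<subseteq> h ` S"
    proof
      fix y assume "y \<in> T"
      then obtain x where x: "(x, y) \<in> G" using ran unfolding G_def by blast
      then have "x \<in> S" using sub by blast
      with iso[OF hG x] show "y \<in> h ` S" by auto
    qed
  qed
  moreover have "inj_on h S" using hG iso by (meson inj_onI)
  ultimately have "bij_betw h S T" by (simp add: bij_betw_def)
  moreover have "\<forall>x\<in>S. \<forall>y\<in>S. le1 x y \<longleftrightarrow> le2 (h x) (h y)" using hG iso by blast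
  ultimately show ?thesis by blast
qed

theorem countable_extension_property_order_iso:
  assumes "countable S" "countable T" "partial_order_on S le1" "partial_order_on T le2"
    and extS: "extension_property S le1" and extT: "extension_property T le2"
  shows "\<exists>h. bij_betw h S T \<and> (\<forall>x\<in>S. \<forall>y\<in>S. le1 x y \<longleftrightarrow> le2 (h x) (h y))"
proof -
  define s where "s = from_nat_into S"
  define t where "t = from_nat_into T"
  have s: "s n \<in> S" "range s = S" and t: "t n \<in> T" "range t = T" for n
    unfolding s_def t_def
    using assms(1,2) extension_property_nonempty[OF extS] extension_property_nonempty[OF extT]
    by (auto intro: from_nat_into range_from_nat_into)
  define P where "P F \<longleftrightarrow> partial_iso le1 le2 S T F" for F
  define step where
    "step n F = (let F' = insert (s n, SOME b. P (insert (s n, b) F)) F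
                 in insert (SOME a. P (insert (a, t n) F'), t n) F')" for n F
  \<comment> \<open>Alternately put the n-th point of S into the domain and the n-th point of T into the range.\<close>
  define F where "F = rec_nat {} step"
  have F_Suc: "F (Suc n) = step n (F n)" for n unfolding F_def by simp
  have "P (F n)" for n
  proof (induction n)
    case 0 show ?case unfolding F_def P_def by (simp add: partial_iso_empty)
  next
    case (Suc n)
    let ?F' = "insert (s n, SOME b. P (insert (s n, b) (F n))) (F n)"
    have "P ?F'"
      using partial_iso_extend_domain[OF Suc[unfolded P_def] assms(3,4) extT s(1)]
      by (metis (mono_tags, lifting) P_def someI_ex)
    then have "P (insert (SOME a. P (insert (a, t n) ?F'), t n) ?F')"
      using partial_iso_extend_range[OF _ assms(3,4) extS t(1)]
      by (metis (mono_tags, lifting) P_def someI_ex)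
    then show ?case unfolding F_Suc step_def Let_def .
  qed
  moreover have "F n \<subseteq> F (Suc n)" for n unfolding F_Suc step_def Let_def by blast
  moreover have "S \<subseteq> Domain (\<Union>n. F n)" "T \<subseteq> Range (\<Union>n. F n)"
  proof -
    have "\<exists>b. (s n, b) \<in> F (Suc n)" for n
      unfolding F_Suc step_def Let_def by (rule exI, rule insertI2, rule insertI1)
    moreover have "\<exists>a. (a, t n) \<in> F (Suc n)" for n
      unfolding F_Suc step_def Let_def by (rule exI, rule insertI1)
    ultimately have "s n \<in> Domain (\<Union>n. F n)" "t n \<in> Range (\<Union>n. F n)" for n
      by (meson DomainI RangeI UN_I UNIV_I)+
    then show "S \<subseteq> Domain (\<Union>n. F n)" "T \<subseteq> Range (\<Union>n. F n)"
      unfolding s(2)[symmetric] t(2)[symmetric] by auto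
  qed
  ultimately show ?thesis
    unfolding P_def by (rule partial_iso_chain_Union)
qed

definition open_interval :: "('a \<Rightarrow> 'a \<Rightarrow> bool) \<Rightarrow> 'a \<Rightarrow> 'a \<Rightarrow> 'a set" where
  "open_interval le c d = {x. po_less le c x \<and> po_less le x d}"

lemma open_interval_extension_property:
  assumes po: "partial_order_on UNIV le" and ext: "extension_property UNIV le" and "po_less le c d"
  shows "extension_property (open_interval le c d) le"
  unfolding extension_property_def
proof (intro allI impI, elim conjE)
  fix A L U assume "finite A" and A: "A \<subseteq> open_interval le c d" and cut: "consistent_cut le A L U"
  note le = partial_order_on_UNIV_D[OF po]
  have cd: "le c d" "\<not> le d c" and inside: "a \<in> A \<Longrightarrow> le c a \<and> le a d \<and> \<not> le a c \<and> \<not> le d a" for a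
    using A \<open>po_less le c d\<close> le(2,3) unfolding open_interval_def po_less_def by blast+
  \<comment> \<open>Realise the cut enlarged by c below and d above; the new point then lies in the interval.\<close>
  note cutD = consistent_cutD[OF cut]
  have cut': "consistent_cut le (insert c (insert d A)) (insert c L) (insert d U)"
  proof (rule consistent_cutI)
    show "insert c L \<subseteq> insert c (insert d A)" "insert d U \<subseteq> insert c (insert d A)"
      using cutD(1,2) by blast+
    show "a \<in> insert c L" if "a \<in> insert c (insert d A)" "b \<in> insert c L" "le a b" for a b
      using that cutD(1,3) cd inside by blast
    show "b \<in> insert d U" if "a \<in> insert d U" "b \<in> insert c (insert d A)" "le a b" for a b
      using that cutD(2,4) cd inside by blast
    show "le a b" if "a \<in> insert c L" "b \<in> insert d U" for a b
      using that cutD(1,2,5) cd inside by blast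
    show "insert c L \<inter> insert d U = {}"
      using cutD(1,2,6) cd inside by blast
  qed
  have "finite (insert c (insert d A))" using \<open>finite A\<close> by simp
  then obtain p where "realizes_cut le (insert c (insert d A)) (insert c L) (insert d U) p"
    using extension_propertyE[OF ext _ subset_UNIV cut'] by blast
  then have "p \<in> open_interval le c d" "realizes_cut le A L U p"
    using cut cd inside unfolding realizes_cut_def open_interval_def po_less_def consistent_cut_def
    by auto
  then show "\<exists>p\<in>open_interval le c d. realizes_cut le A L U p" by blast
qed

definition Inc_pp :: "('a \<Rightarrow> 'a \<Rightarrow> bool) \<Rightarrow> 'a \<Rightarrow> 'a \<Rightarrow> 'a \<Rightarrow> 'a \<Rightarrow> 'a \<Rightarrow> bool" where
  "Inc_pp le c d u x y \<longleftrightarrow> (\<exists>t w v. Sep le c u t x \<and> Sep le c u w y \<and> Sep le c u w v \<and>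
     Sep le c u t v \<and> Sep le d x w v \<and> Sep le d y t v \<and> Sep le x w y t)"

definition Low_pp :: "('a \<Rightarrow> 'a \<Rightarrow> bool) \<Rightarrow> 'a \<Rightarrow> 'a \<Rightarrow> 'a \<Rightarrow> 'a \<Rightarrow> 'a \<Rightarrow> 'a \<Rightarrow> bool" where
  "Low_pp le c d u x y z \<longleftrightarrow> Inc_pp le c d u y z \<and> (\<exists>t. Sep le x y z t) \<and>
     (\<exists>w. Sep le c u d w \<and> Sep le c u w x \<and> Inc_pp le c d u w y \<and> Inc_pp le c d u w z)"

lemma pp_definable_cong:
  assumes "\<And>xs. length xs = k \<Longrightarrow> R xs \<longleftrightarrow> R' xs"
  shows "pp_definable \<Gamma> k R \<longleftrightarrow> pp_definable \<Gamma> k R'"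
  using assms unfolding pp_definable_def by auto

lemma pp_interprets_by_subset:
  fixes h :: "'a \<Rightarrow> 'b" and \<Gamma> :: "('a list \<Rightarrow> bool) list"
  assumes h: "bij_betw h D UNIV"
    and dom: "pp_definable \<Gamma> 1 (\<lambda>xs. xs ! 0 \<in> D)"
    and eq: "pp_definable \<Gamma> 2 (\<lambda>xs. xs ! 0 \<in> D \<and> xs ! 0 = xs ! 1)"
    and rels: "\<And>k R. (k, R) \<in> set \<Delta> \<Longrightarrow> pp_definable \<Gamma> k (\<lambda>xs. set xs \<subseteq> D \<and> R (map h xs))"
  shows "pp_interprets \<Delta> \<Gamma>"
proof -
  define I where "I xs = (if length xs = 1 \<and> xs ! 0 \<in> D then Some (h (xs ! 0)) else None)"
    for xs :: "'a list"
  have I_chunk: "I (chunk 1 i zs) = (if zs ! i \<in> D then Some (h (zs ! i)) else None)"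
    if "i < length zs" for i zs
    using that by (simp add: I_def chunk_def Cons_nth_drop_Suc[symmetric])
  have hinj: "inj_on h D" using h by (simp add: bij_betw_def)
  show ?thesis
    unfolding pp_interprets_def
  proof (intro exI[of _ 1] exI[of _ I] conjI ballI)
    show "\<forall>b. \<exists>xs. length xs = 1 \<and> I xs = Some b"
    proof
      fix b
      obtain x where "x \<in> D" "h x = b" using h by (metis bij_betw_def imageE UNIV_I)
      then show "\<exists>xs. length xs = 1 \<and> I xs = Some b" by (intro exI[of _ "[x]"]) (simp add: I_def)
    qed
    show "pp_definable \<Gamma> 1 (\<lambda>xs. I xs \<noteq> None)"
      using dom by (rule pp_definable_cong[THEN iffD1, rotated]) (auto simp: I_def)
    have "(\<exists>b. I (chunk 1 0 zs) = Some b \<and> I (chunk 1 1 zs) = Some b) \<longleftrightarrow> zs ! 0 \<in> D \<and> zs ! 0 = zs ! 1"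
      if "length zs = 2" for zs
      using that I_chunk[of 0 zs] I_chunk[of 1 zs] inj_on_eq_iff[OF hinj] by auto
    then show "pp_definable \<Gamma> (2 * 1) (\<lambda>zs. \<exists>b. I (chunk 1 0 zs) = Some b \<and> I (chunk 1 1 zs) = Some b)"
      unfolding mult_1_right using eq by (rule pp_definable_cong[THEN iffD2])
  next
    fix kR assume "kR \<in> set \<Delta>"
    obtain k R where kR: "kR = (k, R)" by fastforce
    with \<open>kR \<in> set \<Delta>\<close> have kR_in: "(k, R) \<in> set \<Delta>" by simp
    have "(\<exists>bs. length bs = k \<and> (\<forall>i<k. I (chunk 1 i zs) = Some (bs ! i)) \<and> R bs) \<longleftrightarrow>
        set zs \<subseteq> D \<and> R (map h zs)" if len: "length zs = k * 1" for zs
    proof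
      assume "\<exists>bs. length bs = k \<and> (\<forall>i<k. I (chunk 1 i zs) = Some (bs ! i)) \<and> R bs"
      then obtain bs where bs: "length bs = k" "\<forall>i<k. I (chunk 1 i zs) = Some (bs ! i)" "R bs"
        by blast
      have "zs ! i \<in> D \<and> bs ! i = h (zs ! i)" if "i < k" for i
        using bs(2) len that by (auto simp: I_chunk I_chunk[unfolded One_nat_def] split: if_splits)
      moreover from this have "bs = map h zs" using bs(1) len by (simp add: nth_equalityI)
      ultimately show "set zs \<subseteq> D \<and> R (map h zs)" using bs(3) len by (auto simp: in_set_conv_nth)
    next
      assume "set zs \<subseteq> D \<and> R (map h zs)"
      then show "\<exists>bs. length bs = k \<and> (\<forall>i<k. I (chunk 1 i zs) = Some (bs ! i)) \<and> R bs"
        using len by (intro exI[of _ "map h zs"]) (auto simp: I_chunk I_chunk[unfolded One_nat_def] subset_iff)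
    qed
    from this rels[OF kR_in] show "case kR of (k, R) \<Rightarrow> pp_definable \<Gamma> (k * 1)
        (\<lambda>zs. \<exists>bs. length bs = k \<and> (\<forall>i<k. I (chunk 1 i zs) = Some (bs ! i)) \<and> R bs)"
      unfolding kR prod.case mult_1_right by (rule pp_definable_cong[THEN iffD2])
  qed simp
qed

lemma Low_order_embedding:
  assumes "inj_on h D" "\<forall>x\<in>D. \<forall>y\<in>D. le x y \<longleftrightarrow> le' (h x) (h y)" "x \<in> D" "y \<in> D" "z \<in> D"
  shows "Low le' (h x) (h y) (h z) \<longleftrightarrow> Low le x y z"
  using assms unfolding Low_def po_less_def po_inc_def by (auto simp: inj_on_eq_iff)

definition Sep_structure :: "('a \<Rightarrow> 'a \<Rightarrow> bool) \<Rightarrow> 'a \<Rightarrow> 'a \<Rightarrow> 'a \<Rightarrow> ('a list \<Rightarrow> bool) list" where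
  "Sep_structure le c d u =
     [\<lambda>xs. length xs = 4 \<and> Sep le (xs ! 0) (xs ! 1) (xs ! 2) (xs ! 3),
      \<lambda>xs. xs = [c], \<lambda>xs. xs = [d], \<lambda>xs. xs = [u]]"

lemma ex_length_Suc_iff: "(\<exists>ys. length ys = Suc n \<and> P ys) \<longleftrightarrow> (\<exists>y ys. length ys = n \<and> P (y # ys))"
  by (metis length_Suc_conv)

lemma ex_length_0_iff: "(\<exists>ys. length ys = 0 \<and> P ys) \<longleftrightarrow> P []"
  by auto

lemmas ex_length_numeral_simps = ex_length_Suc_iff ex_length_0_iff eval_nat_numeral BitM.simps numeral_One

definition pp_formula_holds :: "('a list \<Rightarrow> bool) list \<Rightarrow> nat \<Rightarrow> atom list \<Rightarrow> 'a list \<Rightarrow> bool" where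
  "pp_formula_holds \<Gamma> m atoms xs \<longleftrightarrow>
     (\<exists>ys. length ys = m \<and> (\<forall>a\<in>set atoms. holds \<Gamma> (\<lambda>i. (xs @ ys) ! i) a))"

lemma pp_definableI:
  assumes "\<forall>a\<in>set atoms. \<forall>i\<in>atom_vars a. i < k + m"
    and "\<And>xs. length xs = k \<Longrightarrow> R xs \<longleftrightarrow> pp_formula_holds \<Gamma> m atoms xs"
  shows "pp_definable \<Gamma> k R"
  using assms unfolding pp_definable_def pp_formula_holds_def by blast

lemma pp_definable_Sep_interval:
  "pp_definable (Sep_structure le c d u) 1 (\<lambda>xs. Sep le c u d (xs ! 0))" (is "pp_definable ?\<Gamma> 1 ?R")
proof (rule pp_definableI[of "[Rel 1 [1], Rel 2 [2], Rel 3 [3], Rel 0 [1, 3, 2, 0]]" _ 3])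
  fix xs :: "'a list" assume "length xs = 1"
  then obtain x where "xs = [x]" by (auto simp: length_Suc_conv)
  then show "?R xs \<longleftrightarrow> pp_formula_holds ?\<Gamma> 3 [Rel 1 [1], Rel 2 [2], Rel 3 [3], Rel 0 [1, 3, 2, 0]] xs"
    unfolding pp_formula_holds_def by (simp only: ex_length_numeral_simps) (simp add: Sep_structure_def)
qed simp

lemma pp_definable_Sep_interval_eq:
  "pp_definable (Sep_structure le c d u) 2 (\<lambda>xs. Sep le c u d (xs ! 0) \<and> xs ! 0 = xs ! 1)"
    (is "pp_definable ?\<Gamma> 2 ?R")
proof (rule pp_definableI[of "[Rel 1 [2], Rel 2 [3], Rel 3 [4], Rel 0 [2, 4, 3, 0], Eq 0 1]" _ 3])
  fix xs :: "'a list" assume "length xs = 2"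
  then obtain x y where "xs = [x, y]" by (auto simp: numeral_eq_Suc length_Suc_conv)
  then show "?R xs \<longleftrightarrow>
      pp_formula_holds ?\<Gamma> 3 [Rel 1 [2], Rel 2 [3], Rel 3 [4], Rel 0 [2, 4, 3, 0], Eq 0 1] xs"
    unfolding pp_formula_holds_def by (simp only: ex_length_numeral_simps) (auto simp: Sep_structure_def)
qed simp

definition Inc_atoms :: "nat \<Rightarrow> nat \<Rightarrow> nat \<Rightarrow> nat \<Rightarrow> nat \<Rightarrow> atom list" where
  "Inc_atoms x y t w v = [Rel 0 [3, 5, t, x], Rel 0 [3, 5, w, y], Rel 0 [3, 5, w, v], Rel 0 [3, 5, t, v],
     Rel 0 [4, x, w, v], Rel 0 [4, y, t, v], Rel 0 [x, w, y, t]]"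

text \<open>Variables 0, 1, 2 are x, y, z; variables 3, 4, 5 are pinned to c, d, u; the remaining ones
  are the existential witnesses of Low_pp, three for each use of Inc_pp.\<close>
definition Low_atoms :: "atom list" where
  "Low_atoms = [Rel 1 [3], Rel 2 [4], Rel 3 [5], Rel 0 [3, 5, 4, 0], Rel 0 [3, 5, 4, 1], Rel 0 [3, 5, 4, 2],
     Rel 0 [0, 1, 2, 6], Rel 0 [3, 5, 4, 7], Rel 0 [3, 5, 7, 0]]
     @ Inc_atoms 1 2 8 9 10 @ Inc_atoms 7 1 11 12 13 @ Inc_atoms 7 2 14 15 16"

lemma pp_definable_Low_pp:
  "pp_definable (Sep_structure le c d u) 3 (\<lambda>xs. Sep le c u d (xs ! 0) \<and> Sep le c u d (xs ! 1) \<and>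
     Sep le c u d (xs ! 2) \<and> Low_pp le c d u (xs ! 0) (xs ! 1) (xs ! 2))" (is "pp_definable ?\<Gamma> 3 ?R")
proof (rule pp_definableI[of Low_atoms _ 14])
  show "\<forall>a\<in>set Low_atoms. \<forall>i\<in>atom_vars a. i < 3 + 14"
    by (simp add: Low_atoms_def Inc_atoms_def)
  fix xs :: "'a list" assume "length xs = 3"
  then obtain x y z where "xs = [x, y, z]" by (auto simp: numeral_eq_Suc length_Suc_conv)
  then show "?R xs \<longleftrightarrow> pp_formula_holds ?\<Gamma> 14 Low_atoms xs"
    unfolding pp_formula_holds_def Low_atoms_def Inc_atoms_def Low_pp_def Inc_pp_def
    by (simp only: ex_length_numeral_simps) (simp add: Sep_structure_def, blast)
qed

context
  fixes le :: "'a \<Rightarrow> 'a \<Rightarrow> bool" and c d u :: 'a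
  assumes po: "partial_order_on UNIV le" and ext: "extension_property UNIV le"
    and c_less_d: "po_less le c d" and d_less_u: "po_less le d u"
begin

private lemma order_laws: "le x x" "le x y \<Longrightarrow> le y x \<Longrightarrow> x = y" "le x y \<Longrightarrow> le y z \<Longrightarrow> le x z"
  using partial_order_on_UNIV_D[OF po] by blast+

private lemma new_point:
  assumes "finite A" "consistent_cut le A L U"
  obtains p where "p \<notin> A" "\<And>a. a \<in> A \<Longrightarrow> le a p \<longleftrightarrow> a \<in> L" "\<And>a. a \<in> A \<Longrightarrow> le p a \<longleftrightarrow> a \<in> U"
proof -
  obtain p where "realizes_cut le A L U p"
    using extension_propertyE[OF ext assms(1) subset_UNIV assms(2)] .
  then show thesis using that unfolding realizes_cut_def by blast
qed

lemma Sep_c_u_d_iff: "Sep le c u d x \<longleftrightarrow> x \<in> open_interval le c d"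
  using c_less_d d_less_u unfolding open_interval_def Sep_def Cycl_def po_less_def po_inc_def
  by (smt (verit) order_laws mem_Collect_eq)

lemma Sep_c_u_iff:
  assumes "x \<in> open_interval le c d"
  shows "Sep le c u w x \<longleftrightarrow> po_less le x w \<and> po_less le w u"
  using assms c_less_d d_less_u unfolding open_interval_def Sep_def Cycl_def po_less_def po_inc_def
  by (smt (verit) order_laws mem_Collect_eq)

lemma Inc_pp_imp_inc:
  assumes "x \<in> open_interval le c d" "y \<in> open_interval le c d" "Inc_pp le c d u x y"
  shows "po_inc le x y"
proof -
  obtain t w v where s1: "Sep le c u t x" and s2: "Sep le c u w y" and s3: "Sep le c u w v"
    and s4: "Sep le c u t v" and s5: "Sep le d x w v" and s6: "Sep le d y t v" and s7: "Sep le x w y t"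
    using assms(3) unfolding Inc_pp_def by blast
  have x: "po_less le c x" "po_less le x d" and y: "po_less le c y" "po_less le y d"
    using assms(1,2) unfolding open_interval_def by blast+
  have xt: "po_less le x t" "po_less le t u" and yw: "po_less le y w" "po_less le w u"
    using s1 s2 Sep_c_u_iff assms(1,2) by blast+
  have vw: "po_less le c v" "po_less le v w"
    using s3 yw y c_less_d d_less_u unfolding Sep_def Cycl_def po_less_def po_inc_def
    by (smt (verit) order_laws)+
  have vt: "po_less le v t"
    using s4 xt x c_less_d d_less_u unfolding Sep_def Cycl_def po_less_def po_inc_def
    by (smt (verit) order_laws)
  show ?thesis
    using s5 s6 s7 xt yw vw vt x y c_less_d d_less_u unfolding Sep_def Cycl_def po_less_def po_inc_def
    by (smt (verit) order_laws)
qed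

lemma inc_imp_Inc_pp:
  assumes "x \<in> open_interval le c d" "y \<in> open_interval le c d" "po_inc le x y"
  shows "Inc_pp le c d u x y"
proof -
  have lt: "le c d" "le d u" "le c u" "le c x" "le x d" "le c y" "le y d" "le x u" "le y u"
    and nl: "\<not> le d c" "\<not> le u d" "\<not> le u c" "\<not> le d x" "\<not> le u x" "\<not> le x c" "\<not> le d y"
      "\<not> le u y" "\<not> le y c" "\<not> le x y" "\<not> le y x"
    using assms c_less_d d_less_u order_laws unfolding open_interval_def po_less_def po_inc_def
    by blast+
  \<comment> \<open>Witnesses: x < t and y < w, with c < v < t, w, all below u and otherwise unrelated.\<close>
  obtain t where t: "t \<notin> {c, d, u, x, y}"
    and tr: "\<And>a. a \<in> {c, d, u, x, y} \<Longrightarrow> le a t \<longleftrightarrow> a \<in> {c, x}"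
      "\<And>a. a \<in> {c, d, u, x, y} \<Longrightarrow> le t a \<longleftrightarrow> a \<in> {u}"
    by (rule new_point[of "{c, d, u, x, y}" "{c, x}" "{u}"])
      (use lt nl in \<open>auto simp: consistent_cut_def\<close>)
  obtain w where w: "w \<notin> {c, d, u, x, y, t}"
    and wr: "\<And>a. a \<in> {c, d, u, x, y, t} \<Longrightarrow> le a w \<longleftrightarrow> a \<in> {c, y}"
      "\<And>a. a \<in> {c, d, u, x, y, t} \<Longrightarrow> le w a \<longleftrightarrow> a \<in> {u}"
    by (rule new_point[of "{c, d, u, x, y, t}" "{c, y}" "{u}"])
      (use lt nl t tr in \<open>auto simp: consistent_cut_def\<close>)
  obtain v where v: "v \<notin> {c, d, u, x, y, t, w}"
    and vr: "\<And>a. a \<in> {c, d, u, x, y, t, w} \<Longrightarrow> le a v \<longleftrightarrow> a \<in> {c}"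
      "\<And>a. a \<in> {c, d, u, x, y, t, w} \<Longrightarrow> le v a \<longleftrightarrow> a \<in> {t, w, u}"
    by (rule new_point[of "{c, d, u, x, y, t, w}" "{c}" "{t, w, u}"])
      (use lt nl t tr w wr in \<open>auto simp: consistent_cut_def\<close>)
  have facts: "le c t" "le x t" "le t u" "\<not> le d t" "\<not> le y t" "\<not> le u t" "\<not> le t c" "\<not> le t d"
    "\<not> le t x" "\<not> le t y" "le c w" "le y w" "le w u" "\<not> le d w" "\<not> le x w" "\<not> le u w" "\<not> le t w"
    "\<not> le w c" "\<not> le w d" "\<not> le w x" "\<not> le w y" "\<not> le w t" "le c v" "le v t" "le v w" "le v u"
    "\<not> le d v" "\<not> le u v" "\<not> le x v" "\<not> le y v" "\<not> le t v" "\<not> le w v" "\<not> le v c" "\<not> le v d"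
    "\<not> le v x" "\<not> le v y"
    using tr[of c] tr[of d] tr[of u] tr[of x] tr[of y] wr[of c] wr[of d] wr[of u] wr[of x] wr[of y]
      wr[of t] vr[of c] vr[of d] vr[of u] vr[of x] vr[of y] vr[of t] vr[of w] nl lt order_laws(1)
    by auto
  have ne: "t \<noteq> c" "t \<noteq> d" "t \<noteq> u" "t \<noteq> x" "t \<noteq> y" "w \<noteq> c" "w \<noteq> d" "w \<noteq> u" "w \<noteq> x"
    "w \<noteq> y" "w \<noteq> t" "v \<noteq> c" "v \<noteq> d" "v \<noteq> u" "v \<noteq> x" "v \<noteq> y" "v \<noteq> t" "v \<noteq> w"
    using t w v by auto
  have "Sep le c u t x" "Sep le c u w y" "Sep le c u w v" "Sep le c u t v" "Sep le d x w v"
    "Sep le d y t v" "Sep le x w y t"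
    using facts ne lt nl unfolding Sep_def Cycl_def po_less_def po_inc_def
    by (smt (verit) order_laws)+
  then show ?thesis unfolding Inc_pp_def by blast
qed

lemma Inc_pp_iff:
  "x \<in> open_interval le c d \<Longrightarrow> y \<in> open_interval le c d \<Longrightarrow> Inc_pp le c d u x y \<longleftrightarrow> po_inc le x y"
  using Inc_pp_imp_inc inc_imp_Inc_pp by blast

private lemma Sep_witness_if_Low:
  assumes "Low le x y z"
  obtains t where "Sep le x y z t"
proof -
  consider "po_less le x y" "po_inc le z x" "po_inc le z y" | "po_less le x z" "po_inc le y x" "po_inc le y z"
    using assms unfolding Low_def by blast
  then show thesis
  proof cases
    case 1
    then have nl: "le x y" "\<not> le y x" "\<not> le x z" "\<not> le z x" "\<not> le y z" "\<not> le z y"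
      unfolding po_less_def po_inc_def using order_laws by blast+
    obtain t where "t \<notin> {x, y, z}" "\<And>a. a \<in> {x, y, z} \<Longrightarrow> le a t \<longleftrightarrow> a \<in> {z}"
      "\<And>a. a \<in> {x, y, z} \<Longrightarrow> le t a \<longleftrightarrow> a \<in> {}"
      by (rule new_point[of "{x, y, z}" "{z}" "{}"]) (use nl in \<open>auto simp: consistent_cut_def\<close>)
    then have "Sep le x y z t"
      using nl unfolding Sep_def Cycl_def po_less_def po_inc_def by (smt (verit) insert_iff order_laws)
    then show thesis by (rule that)
  next
    case 2
    then have nl: "le x z" "\<not> le z x" "\<not> le x y" "\<not> le y x" "\<not> le y z" "\<not> le z y"
      unfolding po_less_def po_inc_def using order_laws by blast+
    obtain t where "t \<notin> {x, y, z}" "\<And>a. a \<in> {x, y, z} \<Longrightarrow> le a t \<longleftrightarrow> a \<in> {x}"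
      "\<And>a. a \<in> {x, y, z} \<Longrightarrow> le t a \<longleftrightarrow> a \<in> {z}"
      by (rule new_point[of "{x, y, z}" "{x}" "{z}"]) (use nl in \<open>auto simp: consistent_cut_def\<close>)
    then have "Sep le x y z t"
      using nl unfolding Sep_def Cycl_def po_less_def po_inc_def by (smt (verit) insert_iff order_laws)
    then show thesis by (rule that)
  qed
qed

private lemma interval_witness_if_Low:
  assumes x: "x \<in> open_interval le c d" and y: "y \<in> open_interval le c d"
    and z: "z \<in> open_interval le c d" and "Low le x y z"
  obtains w where "w \<in> open_interval le c d" "po_less le x w" "po_inc le w y" "po_inc le w z"
proof -
  have nl: "\<not> le y x" "\<not> le z x"
    using \<open>Low le x y z\<close> order_laws unfolding Low_def po_less_def po_inc_def by blast+
  have cut: "consistent_cut le {x, y, z} {x} {}"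
    using nl unfolding consistent_cut_def by auto
  have "finite {x, y, z}" "{x, y, z} \<subseteq> open_interval le c d" using x y z by simp_all
  then obtain w where "w \<in> open_interval le c d" "realizes_cut le {x, y, z} {x} {} w"
    using extension_propertyE[OF open_interval_extension_property[OF po ext c_less_d] _ _ cut] by blast
  moreover have "le x x" by (rule order_laws)
  ultimately show thesis
    using nl that unfolding realizes_cut_def po_less_def po_inc_def by auto
qed

lemma Low_pp_iff:
  assumes x: "x \<in> open_interval le c d" and y: "y \<in> open_interval le c d"
    and z: "z \<in> open_interval le c d"
  shows "Low_pp le c d u x y z \<longleftrightarrow> Low le x y z"
proof
  assume "Low_pp le c d u x y z"
  then obtain t w where yz: "Inc_pp le c d u y z" and s: "Sep le x y z t" and w: "Sep le c u d w"
    and xw: "Sep le c u w x" and wy: "Inc_pp le c d u w y" and wz: "Inc_pp le c d u w z"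
    unfolding Low_pp_def by blast
  have "w \<in> open_interval le c d" using w Sep_c_u_d_iff by blast
  then have "po_inc le y z" "po_inc le w y" "po_inc le w z"
    using Inc_pp_iff x y z yz wy wz by blast+
  moreover have "po_less le x w" using xw Sep_c_u_iff[OF x] by blast
  \<comment> \<open>x < w with w incomparable to y and z excludes y \<le> x and z \<le> x; Sep x y z t does the rest.\<close>
  ultimately show "Low le x y z"
    using s unfolding Low_def Sep_def Cycl_def po_less_def po_inc_def by (smt (verit) order_laws)
next
  assume low: "Low le x y z"
  obtain t where "Sep le x y z t" using Sep_witness_if_Low[OF low] .
  moreover obtain w where w: "w \<in> open_interval le c d" "po_less le x w" "po_inc le w y" "po_inc le w z"
    using interval_witness_if_Low[OF x y z low] .
  moreover have "po_less le w u"
    using w(1) d_less_u order_laws unfolding open_interval_def po_less_def by blast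
  moreover have "po_inc le y z" using low order_laws unfolding Low_def po_inc_def po_less_def by blast
  ultimately show "Low_pp le c d u x y z"
    unfolding Low_pp_def using Inc_pp_iff Sep_c_u_d_iff Sep_c_u_iff x y z by blast
qed

lemma pp_definable_open_interval:
  "pp_definable (Sep_structure le c d u) 1 (\<lambda>xs. xs ! 0 \<in> open_interval le c d)"
  using pp_definable_Sep_interval[of le c d u] by (simp add: Sep_c_u_d_iff)

lemma pp_definable_open_interval_eq:
  "pp_definable (Sep_structure le c d u) 2 (\<lambda>xs. xs ! 0 \<in> open_interval le c d \<and> xs ! 0 = xs ! 1)"
  using pp_definable_Sep_interval_eq[of le c d u] by (simp add: Sep_c_u_d_iff)

lemma pp_definable_Low_image:
  assumes "inj_on h (open_interval le c d)"
    and "\<forall>x\<in>open_interval le c d. \<forall>y\<in>open_interval le c d. le x y \<longleftrightarrow> le' (h x) (h y)"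
  shows "pp_definable (Sep_structure le c d u) 3
    (\<lambda>xs. set xs \<subseteq> open_interval le c d \<and> Low le' (map h xs ! 0) (map h xs ! 1) (map h xs ! 2))"
proof -
  have "Sep le c u d (xs ! 0) \<and> Sep le c u d (xs ! 1) \<and> Sep le c u d (xs ! 2) \<and>
      Low_pp le c d u (xs ! 0) (xs ! 1) (xs ! 2) \<longleftrightarrow>
      set xs \<subseteq> open_interval le c d \<and> Low le' (map h xs ! 0) (map h xs ! 1) (map h xs ! 2)"
    if len: "length xs = 3" for xs
  proof -
    obtain x y z where "xs = [x, y, z]" using len by (auto simp: numeral_eq_Suc length_Suc_conv)
    then show ?thesis
      using Low_order_embedding[OF assms] Low_pp_iff by (auto simp: Sep_c_u_d_iff)
  qed
  from pp_definable_Low_pp[of le c d u] this show ?thesis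
    by (rule pp_definable_cong[THEN iffD1, rotated])
qed

end

theorem lemma64:
  fixes le :: "'a \<Rightarrow> 'a \<Rightarrow> bool" and c d u :: 'a
  assumes "random_po le"
    and "po_less le c d" and "po_less le d u"
  shows "pp_interprets
           [(3, \<lambda>xs. Low le (xs ! 0) (xs ! 1) (xs ! 2))]
           [\<lambda>xs. length xs = 4 \<and> Sep le (xs ! 0) (xs ! 1) (xs ! 2) (xs ! 3),
            \<lambda>xs. xs = [c], \<lambda>xs. xs = [d], \<lambda>xs. xs = [u]]"
proof -
  let ?D = "open_interval le c d"
  have po: "partial_order_on UNIV le" and "countable (UNIV :: 'a set)"
    using assms(1) unfolding random_po_def by blast+
  moreover have ext: "extension_property UNIV le" using assms(1) by (rule random_po_extension_property)
  moreover have "partial_order_on ?D le" using po unfolding partial_order_on_def by blast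
  ultimately obtain h where h: "bij_betw h ?D UNIV" and h_le: "\<forall>x\<in>?D. \<forall>y\<in>?D. le x y \<longleftrightarrow> le (h x) (h y)"
    using countable_extension_property_order_iso open_interval_extension_property assms(2)
      countable_subset[OF subset_UNIV] by metis
  show ?thesis
    unfolding Sep_structure_def[symmetric]
  proof (rule pp_interprets_by_subset[OF h])
    show "pp_definable (Sep_structure le c d u) k (\<lambda>xs. set xs \<subseteq> ?D \<and> R (map h xs))"
      if "(k, R) \<in> set [(3, \<lambda>xs. Low le (xs ! 0) (xs ! 1) (xs ! 2))]" for k R
      using that pp_definable_Low_image[OF po ext assms(2,3) bij_betw_imp_inj_on[OF h] h_le] by simp
  qed (fact pp_definable_open_interval[OF po ext assms(2,3)] pp_definable_open_interval_eq[OF po ext assms(2,3)])+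
qed

end
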